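(* Let $\mathcal{X}\subseteq\mathcal{P}(\mathbb{N})$ be closed under enumeration equivalence and let $f\colon\mathcal{X}\to\mathcal{P}(\mathbb{N})$ be uniformly $e$-invariant. For any $A,B\in\mathcal{X}$ with $f(A)\neq f(B)$, we have $f(A\oplus\varnothing)\neq f(B\oplus\varnothing)$ and $f(\varnothing\oplus A)\neq f(\varnothing\oplus B)$.
   Context: $X\oplus Y=\{2n:n\in X\}\cup\{2n+1:n\in Y\}$ (note $A\oplus\varnothing\equiv_e A\equiv_e\varnothing\oplus A$, so these sets lie in $\mathcal{X}$). Enumeration reducibility: for $A,B\subseteq\mathbb{N}$, $A\le_e B$ if $A=\Gamma(B):=\{n:\exists D\subseteq B,\ \langle n,D\rangle\in\Gamma\}$ for some c.e. set $\Gamma$ of pairs $\langle n,D\rangle$ with $D$ finite (canonical index); $(\Gamma_i)_{i\in\mathbb{N}}$ is the standard computable numbering of these enumeration operators. $A\equiv_e B$ iff $A\le_e B\le_e A$. Let $\mathcal{X}\subseteq\mathcal{P}(\mathbb{N})$ be closed under $\equiv_e$. A function $f\colon\mathcal{X}\to\mathcal{P}(\mathbb{N})$ is $e$-invariant if $A\equiv_e B$ implies $f(A)\equiv_e f(B)$. Write $A\equiv_e B$ via $\langle i,j\rangle$ if $\Gamma_i(A)=B$ and $\Gamma_j(B)=A$ (with $\langle\cdot,\cdot\rangle$ a fixed computable pairing bijection). A function $u\colon\mathbb{N}\to\mathbb{N}$ is a uniformity function for $f$ if for all $A,B\in\mathcal{X}$ and all $i,j$, whenever $A\equiv_e B$ via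 $\langle i,j\rangle$ then $f(A)\equiv_e f(B)$ via $u(\langle i,j\rangle)$. $f$ is uniformly $e$-invariant if it has some uniformity function. *)

theory Defs
  imports Main "HOL-Library.Nat_Bijection"
begin

datatype recf = Zero | Succ | Proj nat | Comp recf "recf list" | Prim recf recf | Mn recf

inductive eval :: "recf \<Rightarrow> nat list \<Rightarrow> nat \<Rightarrow> bool" where
  zero: "eval Zero xs 0"
| succ: "eval Succ (x # xs) (Suc x)"
| proj: "i < length xs \<Longrightarrow> eval (Proj i) xs (xs ! i)"
| comp: "length ys = length gs \<Longrightarrow> (\<forall>k < length gs. eval (gs ! k) xs (ys ! k))
          \<Longrightarrow> eval f ys z \<Longrightarrow> eval (Comp f gs) xs z"
| prim0: "eval f xs y \<Longrightarrow> eval (Prim f g) (0 # xs) y"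
| primS: "eval (Prim f g) (n # xs) y \<Longrightarrow> eval g (n # y # xs) z
          \<Longrightarrow> eval (Prim f g) (Suc n # xs) z"
| mn: "eval f (n # xs) 0 \<Longrightarrow> (\<forall>m < n. \<exists>y. eval f (m # xs) (Suc y))
          \<Longrightarrow> eval (Mn f) xs n"

definition ce :: "nat set \<Rightarrow> bool" where
  "ce A \<longleftrightarrow> (\<exists>f. \<forall>x. x \<in> A \<longleftrightarrow> (\<exists>y. eval f [x] y))"

definition enum_op :: "nat set \<Rightarrow> nat set \<Rightarrow> nat set" where
  "enum_op W A = {n. \<exists>D. finite D \<and> D \<subseteq> A \<and> prod_encode (n, set_encode D) \<in> W}"

text \<open>A computable numbering of all c.e. sets (hence of all enumeration operators):
  every set in it is c.e., every c.e. set occurs, and the numbering is uniformly c.e.\<close>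
definition ce_numbering :: "(nat \<Rightarrow> nat set) \<Rightarrow> bool" where
  "ce_numbering W \<longleftrightarrow> (\<forall>i. ce (W i)) \<and> (\<forall>A. ce A \<longrightarrow> (\<exists>i. W i = A))
      \<and> ce {prod_encode (i, x) | i x. x \<in> W i}"

definition Gamma :: "(nat \<Rightarrow> nat set) \<Rightarrow> nat \<Rightarrow> nat set \<Rightarrow> nat set" where
  "Gamma W i A = enum_op (W i) A"

definition e_reducible :: "nat set \<Rightarrow> nat set \<Rightarrow> bool" where
  "e_reducible A B \<longleftrightarrow> (\<exists>G. ce G \<and> A = enum_op G B)"

definition e_equiv :: "nat set \<Rightarrow> nat set \<Rightarrow> bool" where
  "e_equiv A B \<longleftrightarrow> e_reducible A B \<and> e_reducible B A"

definition closed_e_equiv :: "nat set set \<Rightarrow> bool" where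
  "closed_e_equiv X \<longleftrightarrow> (\<forall>A B. A \<in> X \<longrightarrow> e_equiv A B \<longrightarrow> B \<in> X)"

definition e_equiv_via :: "(nat \<Rightarrow> nat set) \<Rightarrow> nat set \<Rightarrow> nat set \<Rightarrow> nat \<Rightarrow> bool" where
  "e_equiv_via W A B k \<longleftrightarrow>
     Gamma W (fst (prod_decode k)) A = B \<and> Gamma W (snd (prod_decode k)) B = A"

definition uniformity_function ::
  "(nat \<Rightarrow> nat set) \<Rightarrow> nat set set \<Rightarrow> (nat set \<Rightarrow> nat set) \<Rightarrow> (nat \<Rightarrow> nat) \<Rightarrow> bool" where
  "uniformity_function W X f u \<longleftrightarrow>
     (\<forall>A\<in>X. \<forall>B\<in>X. \<forall>i j. e_equiv_via W A B (prod_encode (i, j))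
        \<longrightarrow> e_equiv_via W (f A) (f B) (u (prod_encode (i, j))))"

definition uniformly_e_invariant ::
  "(nat \<Rightarrow> nat set) \<Rightarrow> nat set set \<Rightarrow> (nat set \<Rightarrow> nat set) \<Rightarrow> bool" where
  "uniformly_e_invariant W X f \<longleftrightarrow> (\<exists>u. uniformity_function W X f u)"

definition join :: "nat set \<Rightarrow> nat set \<Rightarrow> nat set" (infixl "\<oplus>\<^sub>e" 65) where
  "X \<oplus>\<^sub>e Y = {2 * n | n. n \<in> X} \<union> {2 * n + 1 | n. n \<in> Y}"

end

theory Submission
  imports Defs
begin

(* Both Y |-> Y (+) {} and Y |-> {} (+) Y are of the form Y |-> h ` Y with h injective and
   computable, and Y is e-equivalent to h ` Y via one pair of operators <i, j> independent of Y:
   Gamma_i outputs h n once n is enumerated, Gamma_j outputs n once h n is enumerated.  Applied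
   to <i, j>, a uniformity function therefore yields a single operator recovering f Y from
   f (h ` Y) for every Y in X, so f (h ` A) = f (h ` B) would force f A = f B.  These operators
   are c.e. because they only need a few primitive recursive functions (Cantor pairing, 2^n). *)

lemma eval_Zero: "eval Zero xs y \<longleftrightarrow> y = 0"
  by (auto elim: eval.cases intro: eval.intros)

lemma eval_Succ: "eval Succ (x # xs) y \<longleftrightarrow> y = Suc x"
  by (auto elim: eval.cases intro: eval.intros)

lemma eval_Proj: "i < length xs \<Longrightarrow> eval (Proj i) xs y \<longleftrightarrow> y = xs ! i"
  by (auto elim: eval.cases intro: eval.intros)

lemma eval_Comp:
  assumes "length vs = length gs"
    and "\<And>k y. k < length gs \<Longrightarrow> eval (gs ! k) xs y \<longleftrightarrow> y = vs ! k"
  shows "eval (Comp f gs) xs z \<longleftrightarrow> eval f vs z"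
proof
  assume "eval (Comp f gs) xs z"
  then obtain ys where ys: "length ys = length gs" "\<forall>k < length gs. eval (gs ! k) xs (ys ! k)"
    "eval f ys z" by (cases rule: eval.cases) auto
  have "ys = vs" using ys(1,2) assms by (intro nth_equalityI) auto
  then show "eval f vs z" using ys(3) by simp
next
  assume "eval f vs z"
  then show "eval (Comp f gs) xs z" using assms by (intro eval.comp) auto
qed

lemma eval_Prim:
  assumes "\<And>y. eval f xs y \<longleftrightarrow> y = a"
    and "\<And>n y z. eval g (n # y # xs) z \<longleftrightarrow> z = G n y"
  shows "eval (Prim f g) (n # xs) z \<longleftrightarrow> z = rec_nat a G n"
proof (induction n arbitrary: z)
  case 0
  show ?case
    using assms(1) by (auto elim: eval.cases intro: eval.prim0)
next
  case (Suc n)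
  show ?case
    using assms(2) Suc.IH by (auto elim: eval.cases intro: eval.primS)
qed

lemma eval_Mn_dom:
  assumes "\<And>n y. eval f (n # xs) y \<longleftrightarrow> y = F n"
  shows "(\<exists>y. eval (Mn f) xs y) \<longleftrightarrow> (\<exists>n. F n = 0)"
proof
  assume "\<exists>y. eval (Mn f) xs y"
  then obtain y where "eval (Mn f) xs y" by blast
  then show "\<exists>n. F n = 0" using assms by (cases rule: eval.cases) auto
next
  assume "\<exists>n. F n = 0"
  define n where "n = (LEAST n. F n = 0)"
  have "F n = 0" unfolding n_def using \<open>\<exists>n. F n = 0\<close> by (rule LeastI_ex)
  moreover have "\<exists>y. eval f (m # xs) (Suc y)" if "m < n" for m
  proof -
    have "F m \<noteq> 0" using \<open>m < n\<close> unfolding n_def using not_less_Least by blast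
    then have "eval f (m # xs) (Suc (F m - 1))" using assms by simp
    then show ?thesis by blast
  qed
  ultimately have "eval (Mn f) xs n" using assms by (intro eval.mn) auto
  then show "\<exists>y. eval (Mn f) xs y" by blast
qed

definition computes :: "recf \<Rightarrow> nat list \<Rightarrow> nat \<Rightarrow> bool" where
  "computes p xs a \<longleftrightarrow> (\<forall>y. eval p xs y \<longleftrightarrow> y = a)"

lemma computes_Zero: "computes Zero xs 0"
  by (simp add: computes_def eval_Zero)

lemma computes_Succ: "computes Succ [x] (Suc x)"
  by (simp add: computes_def eval_Succ)

lemma computes_Proj: "i < length xs \<Longrightarrow> computes (Proj i) xs (xs ! i)"
  by (simp add: computes_def eval_Proj)

lemma computes_Comp1: "computes g xs a \<Longrightarrow> computes f [a] c \<Longrightarrow> computes (Comp f [g]) xs c"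
  unfolding computes_def by (subst eval_Comp[where vs="[a]"]) (auto simp: less_Suc_eq)

lemma computes_Comp2:
  "computes g xs a \<Longrightarrow> computes h xs b \<Longrightarrow> computes f [a, b] c \<Longrightarrow> computes (Comp f [g, h]) xs c"
  unfolding computes_def by (subst eval_Comp[where vs="[a, b]"]) (auto simp: less_Suc_eq nth_Cons')

lemma computes_Prim:
  "computes f xs a \<Longrightarrow> (\<And>n y. computes g (n # y # xs) (G n y))
    \<Longrightarrow> computes (Prim f g) (n # xs) (rec_nat a G n)"
  unfolding computes_def using eval_Prim[of f xs a g G] by simp

lemma computes_const: "computes (((\<lambda>p. Comp Succ [p]) ^^ a) Zero) xs a"
  by (induction a) (auto intro: computes_Zero computes_Comp1 computes_Succ)

lemma computes_Comp_Proj01: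
  assumes "\<And>m n. computes p [m, n] (G m n)"
  shows "computes (Comp p [Proj 0, Proj 1]) (n # y # xs) (G n y)"
  using computes_Proj[of 0 "n # y # xs"] computes_Proj[of 1 "n # y # xs"]
  by (intro computes_Comp2[OF _ _ assms]) simp_all

definition computable1 :: "(nat \<Rightarrow> nat) \<Rightarrow> bool" where
  "computable1 h \<longleftrightarrow> (\<exists>p. \<forall>n. computes p [n] (h n))"

definition computable2 :: "(nat \<Rightarrow> nat \<Rightarrow> nat) \<Rightarrow> bool" where
  "computable2 g \<longleftrightarrow> (\<exists>p. \<forall>m n. computes p [m, n] (g m n))"

lemma computable1_Suc: "computable1 Suc"
  unfolding computable1_def using computes_Succ by blast

lemma computable1_id: "computable1 (\<lambda>n. n)"
proof -
  have "computes (Proj 0) [n] n" for n using computes_Proj[of 0 "[n]"] by simp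
  then show ?thesis unfolding computable1_def by blast
qed

lemma computable2_fst: "computable2 (\<lambda>m n. m)"
proof -
  have "computes (Proj 0) [m, n] m" for m n using computes_Proj[of 0 "[m, n]"] by simp
  then show ?thesis unfolding computable2_def by blast
qed

lemma computable2_snd: "computable2 (\<lambda>m n. n)"
proof -
  have "computes (Proj 1) [m, n] n" for m n using computes_Proj[of 1 "[m, n]"] by simp
  then show ?thesis unfolding computable2_def by blast
qed

lemma computable1_comp1:
  assumes "computable1 f" "computable1 a"
  shows "computable1 (\<lambda>n. f (a n))"
proof -
  obtain p q where p: "\<And>n. computes p [n] (f n)" and q: "\<And>n. computes q [n] (a n)"
    using assms unfolding computable1_def by blast
  have "computes (Comp p [q]) [n] (f (a n))" for n by (rule computes_Comp1[OF q p])
  then show ?thesis unfolding computable1_def by blast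
qed

lemma computable1_comp2:
  assumes "computable2 g" "computable1 a" "computable1 b"
  shows "computable1 (\<lambda>n. g (a n) (b n))"
proof -
  obtain p where p: "\<And>m n. computes p [m, n] (g m n)"
    using assms(1) unfolding computable2_def by blast
  obtain q r where q: "\<And>n. computes q [n] (a n)" and r: "\<And>n. computes r [n] (b n)"
    using assms(2,3) unfolding computable1_def by blast
  have "computes (Comp p [q, r]) [n] (g (a n) (b n))" for n by (rule computes_Comp2[OF q r p])
  then show ?thesis unfolding computable1_def by blast
qed

lemma computable2_comp1:
  assumes "computable1 f" "computable2 a"
  shows "computable2 (\<lambda>m n. f (a m n))"
proof -
  obtain p where p: "\<And>n. computes p [n] (f n)"
    using assms(1) unfolding computable1_def by blast
  obtain q where q: "\<And>m n. computes q [m, n] (a m n)"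
    using assms(2) unfolding computable2_def by blast
  have "computes (Comp p [q]) [m, n] (f (a m n))" for m n by (rule computes_Comp1[OF q p])
  then show ?thesis unfolding computable2_def by blast
qed

lemma computable2_comp2:
  assumes "computable2 g" "computable2 a" "computable2 b"
  shows "computable2 (\<lambda>m n. g (a m n) (b m n))"
proof -
  obtain p q r where p: "\<And>m n. computes p [m, n] (g m n)"
    and q: "\<And>m n. computes q [m, n] (a m n)" and r: "\<And>m n. computes r [m, n] (b m n)"
    using assms unfolding computable2_def by metis
  have "computes (Comp p [q, r]) [m, n] (g (a m n) (b m n))" for m n
    by (rule computes_Comp2[OF q r p])
  then show ?thesis unfolding computable2_def by blast
qed

lemma computable1_rec_nat:
  assumes "computable2 G"
  shows "computable1 (rec_nat a G)"
proof -
  obtain p where "\<And>m n. computes p [m, n] (G m n)"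
    using assms unfolding computable2_def by blast
  then have "computes (Prim (((\<lambda>p. Comp Succ [p]) ^^ a) Zero) (Comp p [Proj 0, Proj 1])) [n]
      (rec_nat a G n)" for n
    by (intro computes_Prim computes_const computes_Comp_Proj01)
  then show ?thesis unfolding computable1_def by blast
qed

lemma computable2_rec_nat:
  assumes "computable1 a" "computable2 G"
  shows "computable2 (\<lambda>n x. rec_nat (a x) G n)"
proof -
  obtain q where q: "\<And>n. computes q [n] (a n)"
    using assms(1) unfolding computable1_def by blast
  obtain p where "\<And>m n. computes p [m, n] (G m n)"
    using assms(2) unfolding computable2_def by blast
  then have "computes (Prim q (Comp p [Proj 0, Proj 1])) [n, x] (rec_nat (a x) G n)" for n x
    by (intro computes_Prim q computes_Comp_Proj01)
  then show ?thesis unfolding computable2_def by blast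
qed

lemma computable2_plus: "computable2 (+)"
proof -
  have "computable2 (\<lambda>k y. Suc y)"
    by (rule computable2_comp1[OF computable1_Suc computable2_snd])
  then have "computable2 (\<lambda>n x. rec_nat x (\<lambda>k y. Suc y) n)"
    by (rule computable2_rec_nat[OF computable1_id])
  moreover have "rec_nat x (\<lambda>k y. Suc y) n = n + x" for n x :: nat
    by (induction n) simp_all
  ultimately show ?thesis by simp
qed

lemma computable1_pred: "computable1 (\<lambda>n. n - 1)"
proof -
  have "rec_nat 0 (\<lambda>k y. k) = (\<lambda>n. n - 1)"
  proof
    show "rec_nat 0 (\<lambda>k y. k) n = n - 1" for n by (cases n) simp_all
  qed
  with computable1_rec_nat[OF computable2_fst] show ?thesis by metis
qed

lemma computable2_minus: "computable2 (-)"
proof -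
  have "computable2 (\<lambda>n x. rec_nat x (\<lambda>k y. y - 1) n)"
    using computable2_rec_nat[OF computable1_id computable2_comp1[OF computable1_pred computable2_snd]]
    by simp
  moreover have "rec_nat x (\<lambda>k y. y - 1) n = x - n" for n x :: nat
    by (induction n) simp_all
  ultimately have "computable2 (\<lambda>n x. x - n)" by simp
  then show ?thesis using computable2_comp2[OF _ computable2_snd computable2_fst] by blast
qed

lemma computable1_power2: "computable1 (\<lambda>n. 2 ^ n)"
proof -
  have "rec_nat 1 (\<lambda>k y. y + y) = (\<lambda>n. (2::nat) ^ n)"
  proof
    show "rec_nat 1 (\<lambda>k y. y + y) n = (2::nat) ^ n" for n by (induction n) simp_all
  qed
  with computable1_rec_nat[OF computable2_comp2[OF computable2_plus computable2_snd computable2_snd]]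
  show ?thesis by metis
qed

lemma computable1_triangle: "computable1 triangle"
proof -
  have "rec_nat 0 (\<lambda>k y. y + Suc k) = triangle"
  proof
    show "rec_nat 0 (\<lambda>k y. y + Suc k) n = triangle n" for n by (induction n) simp_all
  qed
  with computable1_rec_nat[OF computable2_comp2[OF computable2_plus computable2_snd
        computable2_comp1[OF computable1_Suc computable2_fst]]]
  show ?thesis by metis
qed

lemma computable2_prod_encode: "computable2 (\<lambda>a b. prod_encode (a, b))"
  using computable2_comp2[OF computable2_plus
      computable2_comp1[OF computable1_triangle computable2_plus] computable2_fst]
  by (simp add: prod_encode_def)

lemma ce_exists_zero:
  assumes "computable2 g"
  shows "ce {x. \<exists>n. g n x = 0}"
proof -
  obtain p where "\<And>n x. computes p [n, x] (g n x)"
    using assms unfolding computable2_def by blast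
  then have "(\<exists>y. eval (Mn p) [x] y) \<longleftrightarrow> (\<exists>n. g n x = 0)" for x
    by (intro eval_Mn_dom) (simp add: computes_def)
  then show ?thesis unfolding ce_def by (intro exI[of _ "Mn p"]) simp
qed

lemma ce_range:
  assumes "computable1 h"
  shows "ce (range h)"
proof -
  have h: "computable2 (\<lambda>n x. h n)"
    by (rule computable2_comp1[OF assms computable2_fst])
  \<comment> \<open>in truncated arithmetic, \<open>(x - h n) + (h n - x)\<close> is the distance of \<open>x\<close> and \<open>h n\<close>\<close>
  have dist: "computable2 (\<lambda>n x. (x - h n) + (h n - x))"
    by (rule computable2_comp2[OF computable2_plus computable2_comp2[OF computable2_minus computable2_snd h]
          computable2_comp2[OF computable2_minus h computable2_snd]])
  have "range h = {x. \<exists>n. (x - h n) + (h n - x) = 0}"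
    by auto
  with ce_exists_zero[OF dist] show ?thesis by simp
qed

definition singleton_operator :: "(nat \<Rightarrow> nat) \<Rightarrow> (nat \<Rightarrow> nat) \<Rightarrow> nat set" where
  "singleton_operator a b = range (\<lambda>n. prod_encode (a n, set_encode {b n}))"

lemma enum_op_singleton_operator:
  "enum_op (singleton_operator a b) Y = {a n | n. b n \<in> Y}"
proof (intro set_eqI iffI)
  fix m assume "m \<in> enum_op (singleton_operator a b) Y"
  then obtain D n where "finite D" "D \<subseteq> Y" "m = a n" "set_encode D = set_encode {b n}"
    unfolding enum_op_def singleton_operator_def by auto
  then have "D = {b n}" by (simp add: set_encode_eq del: set_encode_insert)
  then show "m \<in> {a n | n. b n \<in> Y}" using \<open>D \<subseteq> Y\<close> \<open>m = a n\<close> by auto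
next
  fix m assume "m \<in> {a n | n. b n \<in> Y}"
  then obtain n where "m = a n" "b n \<in> Y" by blast
  then show "m \<in> enum_op (singleton_operator a b) Y"
    unfolding enum_op_def singleton_operator_def by (intro CollectI exI[of _ "{b n}"]) auto
qed

lemma ce_singleton_operator:
  assumes "computable1 a" "computable1 b"
  shows "ce (singleton_operator a b)"
proof -
  have "set_encode {n} = 2 ^ n" for n
    using set_encode_insert[of "{}" n] by simp
  moreover have "computable1 (\<lambda>n. prod_encode (a n, 2 ^ b n))"
    by (rule computable1_comp2[OF computable2_prod_encode assms(1)
          computable1_comp1[OF computable1_power2 assms(2)]])
  ultimately show ?thesis
    unfolding singleton_operator_def by (simp add: ce_range)
qed

lemma enum_op_image_operator: "enum_op (singleton_operator h (\<lambda>n. n)) Y = h ` Y"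
  by (auto simp: enum_op_singleton_operator)

lemma enum_op_preimage_operator:
  "inj h \<Longrightarrow> enum_op (singleton_operator (\<lambda>n. n) h) (h ` Y) = Y"
  by (auto simp: enum_op_singleton_operator inj_image_mem_iff)

lemma e_equiv_image:
  assumes "computable1 h" "inj h"
  shows "e_equiv Y (h ` Y)"
  unfolding e_equiv_def e_reducible_def
  using ce_singleton_operator[OF assms(1) computable1_id] ce_singleton_operator[OF computable1_id assms(1)]
    enum_op_image_operator enum_op_preimage_operator[OF assms(2)]
  by metis

lemma e_equiv_via_image_uniform:
  assumes "ce_numbering W" "computable1 h" "inj h"
  obtains k where "\<And>Y. e_equiv_via W Y (h ` Y) k"
proof -
  obtain i where i: "W i = singleton_operator h (\<lambda>n. n)"
    using assms(1) ce_singleton_operator[OF assms(2) computable1_id]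
    unfolding ce_numbering_def by blast
  obtain j where j: "W j = singleton_operator (\<lambda>n. n) h"
    using assms(1) ce_singleton_operator[OF computable1_id assms(2)]
    unfolding ce_numbering_def by blast
  have "e_equiv_via W Y (h ` Y) (prod_encode (i, j))" for Y
    unfolding e_equiv_via_def Gamma_def
    using i j enum_op_image_operator enum_op_preimage_operator[OF assms(3)] by simp
  then show thesis by (rule that)
qed

lemma uniformly_e_invariant_eq_transfer:
  assumes "uniformly_e_invariant W X f"
    and "A \<in> X" "A' \<in> X" "B \<in> X" "B' \<in> X"
    and "e_equiv_via W A A' k" "e_equiv_via W B B' k"
    and "f A' = f B'"
  shows "f A = f B"
proof -
  obtain u where u: "uniformity_function W X f u"
    using assms(1) unfolding uniformly_e_invariant_def by blast
  obtain i j where k: "k = prod_encode (i, j)"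
    by (metis prod_decode_inverse surj_pair)
  have "e_equiv_via W (f A) (f A') (u k)" "e_equiv_via W (f B) (f B') (u k)"
    using u assms(2-7) unfolding uniformity_function_def k by blast+
  then show ?thesis
    using assms(8) unfolding e_equiv_via_def by metis
qed

lemma uniformly_e_invariant_image_neq:
  assumes "ce_numbering W" "closed_e_equiv X" "uniformly_e_invariant W X f"
    and "A \<in> X" "B \<in> X" "f A \<noteq> f B"
    and "computable1 h" "inj h"
  shows "f (h ` A) \<noteq> f (h ` B)"
proof
  assume eq: "f (h ` A) = f (h ` B)"
  obtain k where k: "\<And>Y. e_equiv_via W Y (h ` Y) k"
    using e_equiv_via_image_uniform[OF assms(1,7,8)] by blast
  have "h ` Y \<in> X" if "Y \<in> X" for Y
    using assms(2) that e_equiv_image[OF assms(7,8)] unfolding closed_e_equiv_def by blast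
  then have "f A = f B"
    using uniformly_e_invariant_eq_transfer[OF assms(3) _ _ _ _ k k eq] assms(4,5) by blast
  with assms(6) show False by contradiction
qed

lemma join_empty_right: "Y \<oplus>\<^sub>e {} = (\<lambda>n. 2 * n) ` Y"
  unfolding join_def by auto

lemma join_empty_left: "{} \<oplus>\<^sub>e Y = (\<lambda>n. 2 * n + 1) ` Y"
  unfolding join_def by auto

lemma computable1_double: "computable1 (\<lambda>n. 2 * n)"
  using computable1_comp2[OF computable2_plus computable1_id computable1_id] by (simp add: mult_2)

theorem lemma5p2:
  fixes W :: "nat \<Rightarrow> nat set" and X :: "nat set set" and f :: "nat set \<Rightarrow> nat set"
    and A B :: "nat set"
  assumes "ce_numbering W"
    and "closed_e_equiv X"
    and "uniformly_e_invariant W X f"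
    and "A \<in> X" and "B \<in> X"
    and "f A \<noteq> f B"
  shows "f (A \<oplus>\<^sub>e {}) \<noteq> f (B \<oplus>\<^sub>e {}) \<and> f ({} \<oplus>\<^sub>e A) \<noteq> f ({} \<oplus>\<^sub>e B)"
proof
  have "inj (\<lambda>n::nat. 2 * n)" "inj (\<lambda>n::nat. 2 * n + 1)"
    by (auto intro: injI)
  moreover have "computable1 (\<lambda>n. 2 * n + 1)"
    using computable1_comp1[OF computable1_Suc computable1_double] by simp
  ultimately show "f (A \<oplus>\<^sub>e {}) \<noteq> f (B \<oplus>\<^sub>e {})" "f ({} \<oplus>\<^sub>e A) \<noteq> f ({} \<oplus>\<^sub>e B)"
    unfolding join_empty_left join_empty_right
    using uniformly_e_invariant_image_neq[OF assms] computable1_double by blast+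
qed

end
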